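(* For all integers $m,n\ge 0$, the bubble lattice $\mathrm{Bub}(m,n)$ has order dimension $m+n$.
   Context: For a finite directed graph $G$ without multiple edges, a maximal orthogonal pair is a pair $(X,Y)$ of disjoint vertex subsets with no edge from $X$ to $Y$, maximal for this property; ordered by $(X,Y)\le(X',Y')$ iff $X\subseteq X'$ they form a lattice $L(G)$. Let $X=\{x_1,\dots,x_m\}$, $Y=\{y_1,\dots,y_n\}$ be disjoint alphabets. $\mathrm{Bub}(m,n):=L(G)$ where $G$ has vertex set $X\sqcup Y\sqcup(X\times Y)$ and an edge $l_1\to l_2$ ($l_1\neq l_2$) exactly when: $l_1=(x_s,y_t)$ and $l_2=x_s$; or $l_1=y_t$ and $l_2=(x_s,y_t)$; or $l_1=(x_s,y_t)$, $l_2=(x_{s'},y_{t'})$ with $s\ge s'$ and $t\le t'$ (equivalently, $\mathrm{Bub}(m,n)$ is the extremal lattice with this Galois graph). The order dimension of a poset is the least $d$ such that it embeds as a subposet of $\mathbb R^d$ with the componentwise order. *)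

theory Defs
  imports Complex_Main
begin

definition orth_pair :: "'v set \<Rightarrow> ('v \<Rightarrow> 'v \<Rightarrow> bool) \<Rightarrow> 'v set \<Rightarrow> 'v set \<Rightarrow> bool" where
  "orth_pair V E A B \<longleftrightarrow> A \<subseteq> V \<and> B \<subseteq> V \<and> A \<inter> B = {} \<and> (\<forall>a\<in>A. \<forall>b\<in>B. \<not> E a b)"

definition max_orth_pair :: "'v set \<Rightarrow> ('v \<Rightarrow> 'v \<Rightarrow> bool) \<Rightarrow> 'v set \<Rightarrow> 'v set \<Rightarrow> bool" where
  "max_orth_pair V E A B \<longleftrightarrow> orth_pair V E A B \<and>
     (\<forall>A' B'. orth_pair V E A' B' \<and> A \<subseteq> A' \<and> B \<subseteq> B' \<longrightarrow> A' = A \<and> B' = B)"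

definition L_carrier :: "'v set \<Rightarrow> ('v \<Rightarrow> 'v \<Rightarrow> bool) \<Rightarrow> ('v set \<times> 'v set) set" where
  "L_carrier V E = {(A, B). max_orth_pair V E A B}"

definition L_le :: "('v set \<times> 'v set) \<Rightarrow> ('v set \<times> 'v set) \<Rightarrow> bool" where
  "L_le p q \<longleftrightarrow> fst p \<subseteq> fst q"

definition embeds_in_Rd :: "'a set \<Rightarrow> ('a \<Rightarrow> 'a \<Rightarrow> bool) \<Rightarrow> nat \<Rightarrow> bool" where
  "embeds_in_Rd P le d \<longleftrightarrow>
     (\<exists>f :: 'a \<Rightarrow> nat \<Rightarrow> real. \<forall>x\<in>P. \<forall>y\<in>P. le x y \<longleftrightarrow> (\<forall>i<d. f x i \<le> f y i))"

definition order_dim :: "'a set \<Rightarrow> ('a \<Rightarrow> 'a \<Rightarrow> bool) \<Rightarrow> nat" where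
  "order_dim P le = (LEAST d. embeds_in_Rd P le d)"

datatype bvert = Xv nat | Yv nat | XYv nat nat

definition bub_verts :: "nat \<Rightarrow> nat \<Rightarrow> bvert set" where
  "bub_verts m n = Xv ` {1..m} \<union> Yv ` {1..n} \<union> {XYv s t | s t. s \<in> {1..m} \<and> t \<in> {1..n}}"

fun bub_edge0 :: "bvert \<Rightarrow> bvert \<Rightarrow> bool" where
  "bub_edge0 (XYv s t) (Xv s') = (s = s')"
| "bub_edge0 (Yv t) (XYv s t') = (t = t')"
| "bub_edge0 (XYv s t) (XYv s' t') = (s \<ge> s' \<and> t \<le> t')"
| "bub_edge0 _ _ = False"

definition bub_edge :: "nat \<Rightarrow> nat \<Rightarrow> bvert \<Rightarrow> bvert \<Rightarrow> bool" where
  "bub_edge m n l1 l2 \<longleftrightarrow> l1 \<in> bub_verts m n \<and> l2 \<in> bub_verts m n \<and> l1 \<noteq> l2 \<and> bub_edge0 l1 l2"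

definition Bub :: "nat \<Rightarrow> nat \<Rightarrow> (bvert set \<times> bvert set) set" where
  "Bub m n = L_carrier (bub_verts m n) (bub_edge m n)"

end

theory Submission
  imports Defs
begin

text \<open>Upper bound: every vertex lies in one of the m + n sets row_s = {x_s} \<union> {(x_s, y_t) | t}
  and {y_t}. Because of the edges (x_s, y_t) -> (x_s, y_t') for t < t' and (x_s, y_t) -> x_s,
  the left part X of a maximal orthogonal pair meets row_s in an up-set of the chain
  (x_s, y_1) < ... < (x_s, y_n) < x_s. Hence these traces are nested, so X \<subseteq> X' iff
  |X \<inter> C| \<le> |X' \<inter> C| for each of these m + n sets C: an embedding of Bub(m, n) into R^(m+n).

  Lower bound: for each vertex v among the x_s and y_t take the pair a_v with left part {v} and the
  pair b_v with right part {v}. Then a_v \<le> b_w exactly when v \<noteq> w, a standard example of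
  dimension m + n.\<close>

lemma max_orth_pair_fst_closed:
  assumes max: "max_orth_pair V E X Y"
    and u: "u \<in> V" "u \<notin> Y" "\<And>y. y \<in> Y \<Longrightarrow> \<not> E u y"
  shows "u \<in> X"
proof -
  have "orth_pair V E (insert u X) Y"
    using max u by (auto simp: max_orth_pair_def orth_pair_def)
  then have "insert u X = X"
    using max by (auto simp: max_orth_pair_def)
  then show ?thesis
    by blast
qed

lemma max_orth_pairI:
  assumes X: "\<And>u. u \<in> X \<longleftrightarrow> u \<in> V \<and> u \<notin> Y \<and> (\<forall>y\<in>Y. \<not> E u y)"
    and Y: "\<And>v. v \<in> Y \<longleftrightarrow> v \<in> V \<and> v \<notin> X \<and> (\<forall>x\<in>X. \<not> E x v)"
  shows "max_orth_pair V E X Y"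
proof -
  have "orth_pair V E X Y"
    unfolding orth_pair_def using X Y by blast
  moreover have "A' \<subseteq> X \<and> B' \<subseteq> Y"
    if orth': "orth_pair V E A' B'" "X \<subseteq> A'" "Y \<subseteq> B'" for A' B'
  proof
    show "A' \<subseteq> X"
    proof
      fix u assume "u \<in> A'"
      then have "u \<in> V \<and> u \<notin> Y \<and> (\<forall>y\<in>Y. \<not> E u y)"
        using orth' unfolding orth_pair_def by blast
      then show "u \<in> X"
        using X by blast
    qed
    show "B' \<subseteq> Y"
    proof
      fix v assume "v \<in> B'"
      then have "v \<in> V \<and> v \<notin> X \<and> (\<forall>x\<in>X. \<not> E x v)"
        using orth' unfolding orth_pair_def by blast
      then show "v \<in> Y"
        using Y by blast
    qed
  qed
  ultimately show ?thesis
    unfolding max_orth_pair_def by blast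
qed

lemma max_orth_pairD:
  assumes "max_orth_pair V E X Y"
  shows "X \<subseteq> V" "X \<inter> Y = {}" "\<And>x y. x \<in> X \<Longrightarrow> y \<in> Y \<Longrightarrow> \<not> E x y"
  using assms by (auto simp: max_orth_pair_def orth_pair_def)

lemma card_le_embedding_dim_standard_example:
  assumes emb: "embeds_in_Rd P le d"
    and mem: "\<And>i. i \<in> I \<Longrightarrow> a i \<in> P \<and> b i \<in> P"
    and le: "\<And>i j. i \<in> I \<Longrightarrow> j \<in> I \<Longrightarrow> i \<noteq> j \<Longrightarrow> le (a i) (b j)"
    and not_le: "\<And>i. i \<in> I \<Longrightarrow> \<not> le (a i) (b i)"
  shows "card I \<le> d"
proof -
  obtain f :: "'a \<Rightarrow> nat \<Rightarrow> real"
    where f: "\<forall>x\<in>P. \<forall>y\<in>P. le x y \<longleftrightarrow> (\<forall>k<d. f x k \<le> f y k)"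
    using emb unfolding embeds_in_Rd_def by blast
  have "\<forall>i\<in>I. \<exists>k<d. f (b i) k < f (a i) k"
    using f mem not_le by force
  then obtain c where c: "\<And>i. i \<in> I \<Longrightarrow> c i < d \<and> f (b i) (c i) < f (a i) (c i)"
    by metis
  have "inj_on c I"
  proof (rule inj_onI, rule ccontr)
    fix i j assume i: "i \<in> I" and j: "j \<in> I" and same: "c i = c j" and "i \<noteq> j"
    then have "f (a i) (c i) \<le> f (b j) (c i)" "f (a j) (c i) \<le> f (b i) (c i)"
      using f mem le c by blast+
    moreover have "f (b j) (c i) < f (a j) (c i)" "f (b i) (c i) < f (a i) (c i)"
      using c i j same by metis+
    ultimately show False by linarith
  qed
  moreover have "c ` I \<subseteq> {..<d}"
    using c by auto
  ultimately have "card I \<le> card {..<d}"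
    by (intro card_inj_on_le) auto
  then show ?thesis
    by simp
qed

lemma embeds_in_Rd_nested_cover:
  fixes C :: "nat \<Rightarrow> 'v set"
  assumes fin: "\<And>p. p \<in> P \<Longrightarrow> finite (fst p)"
    and cover: "\<And>p. p \<in> P \<Longrightarrow> fst p \<subseteq> (\<Union>i<k. C i)"
    and nested: "\<And>i p q. i < k \<Longrightarrow> p \<in> P \<Longrightarrow> q \<in> P \<Longrightarrow>
                   fst p \<inter> C i \<subseteq> fst q \<inter> C i \<or> fst q \<inter> C i \<subseteq> fst p \<inter> C i"
  shows "embeds_in_Rd P L_le k"
proof -
  have "L_le p q \<longleftrightarrow> (\<forall>i<k. real (card (fst p \<inter> C i)) \<le> real (card (fst q \<inter> C i)))"
    if p: "p \<in> P" and q: "q \<in> P" for p q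
  proof
    assume "L_le p q"
    then show "\<forall>i<k. real (card (fst p \<inter> C i)) \<le> real (card (fst q \<inter> C i))"
      using fin[OF q] by (auto simp: L_le_def intro: card_mono)
  next
    assume card_le: "\<forall>i<k. real (card (fst p \<inter> C i)) \<le> real (card (fst q \<inter> C i))"
    have "fst p \<inter> C i \<subseteq> fst q \<inter> C i" if i: "i < k" for i
    proof (rule ccontr)
      assume "\<not> fst p \<inter> C i \<subseteq> fst q \<inter> C i"
      then have "fst q \<inter> C i \<subset> fst p \<inter> C i"
        using nested[OF i p q] by blast
      then have "card (fst q \<inter> C i) < card (fst p \<inter> C i)"
        using fin[OF p] by (simp add: psubset_card_mono)
      then show False
        using card_le[rule_format, OF i] by simp
    qed
    then show "L_le p q"
      using cover[OF p] unfolding L_le_def by blast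
  qed
  then show ?thesis
    unfolding embeds_in_Rd_def
    by (intro exI[of _ "\<lambda>p i. real (card (fst p \<inter> C i))"]) blast
qed

lemma bub_verts_simps [simp]:
  "Xv s \<in> bub_verts m n \<longleftrightarrow> 1 \<le> s \<and> s \<le> m"
  "Yv t \<in> bub_verts m n \<longleftrightarrow> 1 \<le> t \<and> t \<le> n"
  "XYv s t \<in> bub_verts m n \<longleftrightarrow> 1 \<le> s \<and> s \<le> m \<and> 1 \<le> t \<and> t \<le> n"
  by (auto simp: bub_verts_def)

lemma finite_bub_verts: "finite (bub_verts m n)"
proof -
  have "{XYv s t | s t. s \<in> {1..m} \<and> t \<in> {1..n}} = case_prod XYv ` ({1..m} \<times> {1..n})"
    by auto
  then show ?thesis
    by (simp add: bub_verts_def)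
qed

lemma mem_Bub_iff: "(X, Y) \<in> Bub m n \<longleftrightarrow> max_orth_pair (bub_verts m n) (bub_edge m n) X Y"
  by (simp add: Bub_def L_carrier_def)

lemma Bub_XYv_imp_Xv:
  assumes XY: "(X, Y) \<in> Bub m n" and st: "XYv s t \<in> X"
  shows "Xv s \<in> X"
proof (rule max_orth_pair_fst_closed)
  show max: "max_orth_pair (bub_verts m n) (bub_edge m n) X Y"
    using XY by (simp add: mem_Bub_iff)
  have "XYv s t \<in> bub_verts m n"
    using max_orth_pairD(1)[OF max] st by blast
  then show "Xv s \<in> bub_verts m n" and "Xv s \<notin> Y"
    using max_orth_pairD(3)[OF max st, of "Xv s"] by (auto simp: bub_edge_def)
  show "\<not> bub_edge m n (Xv s) y" for y
    by (cases y) (simp_all add: bub_edge_def)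
qed

lemma Bub_XYv_mono:
  assumes XY: "(X, Y) \<in> Bub m n" and st: "XYv s t \<in> X" and tt': "t \<le> t'" "t' \<le> n"
  shows "XYv s t' \<in> X"
proof (cases "t = t'")
  case True
  with st show ?thesis
    by simp
next
  case False
  have max: "max_orth_pair (bub_verts m n) (bub_edge m n) X Y"
    using XY by (simp add: mem_Bub_iff)
  have st_V: "XYv s t \<in> bub_verts m n"
    using max_orth_pairD(1)[OF max] st by blast
  show ?thesis
  proof (rule max_orth_pair_fst_closed[OF max])
    show "XYv s t' \<in> bub_verts m n"
      using st_V tt' by simp
    then have "bub_edge m n (XYv s t) (XYv s t')"
      using st_V tt' False by (simp add: bub_edge_def)
    then show "XYv s t' \<notin> Y"
      using max_orth_pairD(3)[OF max st] by blast
    fix y assume y: "y \<in> Y"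
    have "Xv s \<notin> Y"
      using Bub_XYv_imp_Xv[OF XY st] max_orth_pairD(2)[OF max] by blast
    then have "bub_edge m n (XYv s t') y \<Longrightarrow> bub_edge m n (XYv s t) y"
      using y st_V tt' by (cases y) (auto simp: bub_edge_def)
    then show "\<not> bub_edge m n (XYv s t') y"
      using max_orth_pairD(3)[OF max st y] by blast
  qed
qed

definition bub_row :: "nat \<Rightarrow> bvert set" where
  "bub_row s = insert (Xv s) (range (XYv s))"

lemma Bub_row_nested:
  assumes XY: "(X, Y) \<in> Bub m n" and XY': "(X', Y') \<in> Bub m n"
  shows "X \<inter> bub_row s \<subseteq> X' \<inter> bub_row s \<or> X' \<inter> bub_row s \<subseteq> X \<inter> bub_row s"
proof (rule ccontr)
  assume "\<not> ?thesis"
  then obtain a b where a: "a \<in> X - X'" "a \<in> bub_row s" and b: "b \<in> X' - X" "b \<in> bub_row s"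
    by blast
  have "X \<subseteq> bub_verts m n" "X' \<subseteq> bub_verts m n"
    using XY XY' by (auto simp: mem_Bub_iff dest: max_orth_pairD(1))
  then show False
    using a b Bub_XYv_imp_Xv[OF XY] Bub_XYv_imp_Xv[OF XY']
    by (auto simp: bub_row_def)
      (meson Bub_XYv_mono XY XY' bub_verts_simps(3) nat_le_linear subsetD)
qed

lemma Bub_Xv_left: "1 \<le> s \<Longrightarrow> s \<le> m \<Longrightarrow> ({Xv s}, bub_verts m n - {Xv s}) \<in> Bub m n"
  unfolding mem_Bub_iff by (rule max_orth_pairI) (auto simp: bub_edge_def elim: bub_edge0.elims)

lemma Bub_Yv_right: "1 \<le> t \<Longrightarrow> t \<le> n \<Longrightarrow> (bub_verts m n - {Yv t}, {Yv t}) \<in> Bub m n"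
  unfolding mem_Bub_iff by (rule max_orth_pairI) (auto simp: bub_edge_def elim: bub_edge0.elims)

lemma Bub_Xv_right: "1 \<le> s \<Longrightarrow> s \<le> m \<Longrightarrow> (bub_verts m n - bub_row s, {Xv s}) \<in> Bub m n"
  unfolding mem_Bub_iff
  by (rule max_orth_pairI) (auto simp: bub_edge_def bub_row_def elim: bub_edge0.elims)

lemma Bub_Yv_left:
  "1 \<le> t \<Longrightarrow> t \<le> n \<Longrightarrow>
    ({Yv t}, bub_verts m n - insert (Yv t) (range (\<lambda>s. XYv s t))) \<in> Bub m n"
  unfolding mem_Bub_iff by (rule max_orth_pairI) (auto simp: bub_edge_def elim: bub_edge0.elims)

definition bub_chain :: "nat \<Rightarrow> nat \<Rightarrow> bvert set" where
  "bub_chain m i = (if i < m then bub_row (Suc i) else {Yv (i - m + 1)})"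

lemma bub_verts_subset_bub_chains: "bub_verts m n \<subseteq> (\<Union>i<m + n. bub_chain m i)"
proof
  fix v assume v: "v \<in> bub_verts m n"
  show "v \<in> (\<Union>i<m + n. bub_chain m i)"
  proof (cases v)
    case (Xv s)
    with v show ?thesis
      by (intro UN_I[of "s - 1"]) (auto simp: bub_chain_def bub_row_def)
  next
    case (Yv t)
    with v show ?thesis
      by (intro UN_I[of "m + t - 1"]) (auto simp: bub_chain_def)
  next
    case (XYv s t)
    with v show ?thesis
      by (intro UN_I[of "s - 1"]) (auto simp: bub_chain_def bub_row_def)
  qed
qed

lemma embeds_in_Rd_Bub: "embeds_in_Rd (Bub m n) L_le (m + n)"
proof (rule embeds_in_Rd_nested_cover[where C = "bub_chain m"])
  fix p assume "p \<in> Bub m n"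
  then have sub: "fst p \<subseteq> bub_verts m n"
    using max_orth_pairD(1) by (metis mem_Bub_iff prod.collapse)
  show "finite (fst p)"
    using finite_bub_verts sub by (rule finite_subset[rotated])
  show "fst p \<subseteq> (\<Union>i<m + n. bub_chain m i)"
    using sub bub_verts_subset_bub_chains by (rule order_trans)
next
  fix i p q assume "i < m + n" "p \<in> Bub m n" "q \<in> Bub m n"
  then show "fst p \<inter> bub_chain m i \<subseteq> fst q \<inter> bub_chain m i \<or>
             fst q \<inter> bub_chain m i \<subseteq> fst p \<inter> bub_chain m i"
    using Bub_row_nested[of "fst p" "snd p" m n "fst q" "snd q" "Suc i"]
    by (cases "i < m") (auto simp: bub_chain_def)
qed

definition bub_std_low :: "nat \<Rightarrow> nat \<Rightarrow> nat \<Rightarrow> bvert set \<times> bvert set" where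
  "bub_std_low m n i = (if i < m then ({Xv (Suc i)}, bub_verts m n - {Xv (Suc i)})
     else ({Yv (i - m + 1)}, bub_verts m n - insert (Yv (i - m + 1)) (range (\<lambda>s. XYv s (i - m + 1)))))"

definition bub_std_high :: "nat \<Rightarrow> nat \<Rightarrow> nat \<Rightarrow> bvert set \<times> bvert set" where
  "bub_std_high m n i = (if i < m then (bub_verts m n - bub_row (Suc i), {Xv (Suc i)})
     else (bub_verts m n - {Yv (i - m + 1)}, {Yv (i - m + 1)}))"

lemma bub_std_mem_Bub:
  assumes "i < m + n"
  shows "bub_std_low m n i \<in> Bub m n" "bub_std_high m n i \<in> Bub m n"
  using assms Bub_Xv_left Bub_Xv_right Bub_Yv_left Bub_Yv_right
  by (simp_all add: bub_std_low_def bub_std_high_def)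

lemma bub_std_low_le_high:
  assumes "i < m + n" "j < m + n"
  shows "L_le (bub_std_low m n i) (bub_std_high m n j) \<longleftrightarrow> i \<noteq> j"
  using assms
  by (cases "i < m"; cases "j < m")
    (auto simp: L_le_def bub_std_low_def bub_std_high_def bub_row_def)

lemma embeds_in_Rd_Bub_dim_ge:
  assumes "embeds_in_Rd (Bub m n) L_le d"
  shows "m + n \<le> d"
  using card_le_embedding_dim_standard_example[OF assms,
      of "{..<m + n}" "bub_std_low m n" "bub_std_high m n"]
  by (simp add: bub_std_mem_Bub bub_std_low_le_high)

theorem proposition4p4:
  fixes m n :: nat
  shows "order_dim (Bub m n) L_le = m + n"
  unfolding order_dim_def
  by (rule Least_equality) (auto intro: embeds_in_Rd_Bub embeds_in_Rd_Bub_dim_ge)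

end
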